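(* Let $\kappa$ be a cardinal and let $(X,\tau)$ be a $\kappa$-exclusive space with Lindelöf degree $L(X)=\kappa$. Then $X$ is a D-space.
   Context: The Lindelöf degree $L(X)$ is the least cardinal $\kappa$ such that every open cover of $X$ has a subcover of cardinality at most $\kappa$. For a cardinal $\kappa$, $(X,\tau)$ is $\kappa$-exclusive if for every $x\in X$, every open neighborhood $U$ of $x$, and every $A\subseteq U$ with $x\notin A$ and $|A|\le\kappa$, there is an open neighborhood $V$ of $x$ with $V\subseteq U\setminus A$. An open neighborhood assignment is a function $N:X\to\tau$ with $x\in N(x)$ for all $x$. $X$ is a D-space if for every open neighborhood assignment $N$ there is a closed discrete $D\subseteq X$ with $\bigcup_{d\in D}N(d)=X$. *)

theory Defs
  imports "HOL-Analysis.Analysis" "HOL-Library.Equipollence"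
begin

text \<open>Cardinals are represented by sets K of an arbitrary type; "|A| \<le> \<kappa>" is A \<lesssim> K.\<close>

definition open_cover :: "'a topology \<Rightarrow> 'a set set \<Rightarrow> bool" where
  "open_cover X \<U> \<longleftrightarrow> (\<forall>U\<in>\<U>. openin X U) \<and> \<Union>\<U> = topspace X"

definition lindelof_le :: "'a topology \<Rightarrow> 'k set \<Rightarrow> bool" where
  "lindelof_le X K \<longleftrightarrow>
     (\<forall>\<U>. open_cover X \<U> \<longrightarrow> (\<exists>\<V>. \<V> \<subseteq> \<U> \<and> \<Union>\<V> = topspace X \<and> \<V> \<lesssim> K))"

text \<open>L(X) = |K|: |K| is the least cardinal with the above property
  (every smaller cardinal is represented by a set M of the same type with M \<prec> K).\<close>
definition lindelof_degree_eq :: "'a topology \<Rightarrow> 'k set \<Rightarrow> bool" where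
  "lindelof_degree_eq X K \<longleftrightarrow>
     lindelof_le X K \<and> (\<forall>M::'k set. M \<prec> K \<longrightarrow> \<not> lindelof_le X M)"

definition kappa_exclusive :: "'k set \<Rightarrow> 'a topology \<Rightarrow> bool" where
  "kappa_exclusive K X \<longleftrightarrow>
     (\<forall>x U A. x \<in> topspace X \<and> openin X U \<and> x \<in> U \<and> A \<subseteq> U \<and> x \<notin> A \<and> A \<lesssim> K
        \<longrightarrow> (\<exists>V. openin X V \<and> x \<in> V \<and> V \<subseteq> U - A))"

definition open_nbhd_assignment :: "'a topology \<Rightarrow> ('a \<Rightarrow> 'a set) \<Rightarrow> bool" where
  "open_nbhd_assignment X N \<longleftrightarrow> (\<forall>x\<in>topspace X. openin X (N x) \<and> x \<in> N x)"

definition closed_discrete :: "'a topology \<Rightarrow> 'a set \<Rightarrow> bool" where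
  "closed_discrete X D \<longleftrightarrow> closedin X D \<and> subtopology X D = discrete_topology D"

definition D_space :: "'a topology \<Rightarrow> bool" where
  "D_space X \<longleftrightarrow>
     (\<forall>N. open_nbhd_assignment X N \<longrightarrow>
        (\<exists>D. closed_discrete X D \<and> \<Union>(N ` D) = topspace X))"

end

theory Submission
  imports Defs
begin

text \<open>By the Lindel\<ouml>f bound, the cover by the neighbourhoods N x has a subcover indexed by a
  set D of at most \<kappa> points. In a \<kappa>-exclusive space every set of at most \<kappa> points is
  closed, and so is each of its subsets; hence D is closed and discrete. Only L(X) \<le> \<kappa> is
  needed.\<close>

lemma kappa_exclusive_closedin:
  assumes "kappa_exclusive K X" "B \<subseteq> topspace X" "B \<lesssim> K"
  shows "closedin X B"
proof -
  have "openin X (topspace X - B)"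
  proof (subst openin_subopen, intro ballI)
    fix x assume "x \<in> topspace X - B"
    then show "\<exists>W. openin X W \<and> x \<in> W \<and> W \<subseteq> topspace X - B"
      using assms unfolding kappa_exclusive_def by (metis DiffD1 DiffD2 openin_topspace)
  qed
  then show ?thesis using assms(2) by (simp add: closedin_def)
qed

lemma kappa_exclusive_closed_discrete:
  assumes ex: "kappa_exclusive K X" and D: "D \<subseteq> topspace X" "D \<lesssim> K"
  shows "closed_discrete X D"
proof -
  have "D \<inter> X derived_set_of D = {}"
  proof (rule ccontr)
    assume "D \<inter> X derived_set_of D \<noteq> {}"
    then obtain x where x: "x \<in> D" "x \<in> X derived_set_of D" by blast
    have "D - {x} \<lesssim> K"
      using lepoll_trans[OF subset_imp_lepoll D(2)] by blast
    then obtain W where "openin X W" "x \<in> W" "W \<subseteq> topspace X - (D - {x})"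
      using ex[unfolded kappa_exclusive_def, rule_format, of x "topspace X" "D - {x}"] x(1) D(1)
      by auto
    then show False using x(2) unfolding in_derived_set_of by blast
  qed
  then have "subtopology X D = discrete_topology D"
    using D(1) by (simp add: subtopology_eq_discrete_topology_eq)
  then show ?thesis
    using kappa_exclusive_closedin[OF ex D] by (simp add: closed_discrete_def)
qed

lemma lindelof_le_nbhd_assignment_kernel:
  assumes L: "lindelof_le X K" and N: "open_nbhd_assignment X N"
  obtains D where "D \<subseteq> topspace X" "D \<lesssim> K" "\<Union>(N ` D) = topspace X"
proof -
  have N': "openin X (N x)" "x \<in> N x" if "x \<in> topspace X" for x
    using N that unfolding open_nbhd_assignment_def by auto
  then have "\<Union>(N ` topspace X) = topspace X"
    using openin_subset by blast
  then have "open_cover X (N ` topspace X)"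
    using N' unfolding open_cover_def by blast
  then obtain \<V> where \<V>: "\<V> \<subseteq> N ` topspace X" "\<Union>\<V> = topspace X" "\<V> \<lesssim> K"
    using L unfolding lindelof_le_def by meson
  then obtain D where D: "D \<subseteq> topspace X" "inj_on N D" "\<V> = N ` D"
    using subset_image_inj by metis
  have "D \<approx> \<V>"
    unfolding D(3) using eqpoll_sym[OF inj_on_image_eqpoll_self[OF D(2)]] .
  then have "D \<lesssim> K"
    using \<V>(3) by (rule lepoll_trans1)
  then show thesis
    using that D \<V>(2) by blast
qed

theorem mainTheorem6:
  fixes X :: "'a topology" and K :: "'k set"
  assumes "kappa_exclusive K X"
    and "lindelof_degree_eq X K"
  shows "D_space X"
  unfolding D_space_def
proof (intro allI impI)
  fix N assume "open_nbhd_assignment X N"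
  moreover have "lindelof_le X K"
    using assms(2) by (simp add: lindelof_degree_eq_def)
  ultimately obtain D where "D \<subseteq> topspace X" "D \<lesssim> K" "\<Union>(N ` D) = topspace X"
    using lindelof_le_nbhd_assignment_kernel by blast
  then show "\<exists>D. closed_discrete X D \<and> \<Union>(N ` D) = topspace X"
    using kappa_exclusive_closed_discrete[OF assms(1)] by blast
qed

end
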